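(* The minimum $n$ for which there exist two distinct $n\times n\times n$ alternating sign hypermatrices $A$ and $B$ with $L(A)=L(B)$ is $4$. That is, no such pair exists for $n\le 3$, and such a pair exists for $n=4$.
   Context: An alternating sign hypermatrix (ASHM) is an $n\times n\times n$ hypermatrix $A=[a_{ijk}]$ with entries in $\{0,1,-1\}$ such that in every row line $[a_{ijk}: i=1,\dots,n]$ (fixed $j,k$), column line $[a_{ijk}: j=1,\dots,n]$ (fixed $i,k$) and vertical line $[a_{ijk}: k=1,\dots,n]$ (fixed $i,j$) the non-zero entries alternate in sign, starting and ending with $+1$. The $k$-th plane of $A$ is $P_k(A)=[a_{ijk}]_{i,j=1}^n$, and $L(A)=\sum_{k=1}^n k\,P_k(A)$ is an $n\times n$ matrix. *)

theory Defs
  imports Main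
begin

text \<open>An n x n x n hypermatrix is modelled as a function nat => nat => nat => int,
  with indices ranging over {1..n}; entries outside this range are required to be 0
  so that equality of hypermatrices is equality of functions.\<close>

type_synonym hypermatrix = "nat \<Rightarrow> nat \<Rightarrow> nat \<Rightarrow> int"

definition alt_sign_line :: "nat \<Rightarrow> (nat \<Rightarrow> int) \<Rightarrow> bool" where
  "alt_sign_line n f \<longleftrightarrow>
     (\<forall>i\<in>{1..n}. f i \<in> {-1, 0, 1}) \<and>
     (let xs = filter (\<lambda>x. x \<noteq> 0) (map f [1..<n+1]) in
        xs \<noteq> [] \<and> hd xs = 1 \<and> last xs = 1 \<and>
        (\<forall>i. Suc i < length xs \<longrightarrow> xs ! Suc i = - (xs ! i)))"

definition ASHM :: "nat \<Rightarrow> hypermatrix \<Rightarrow> bool" where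
  "ASHM n A \<longleftrightarrow>
     (\<forall>i j k. \<not> (i \<in> {1..n} \<and> j \<in> {1..n} \<and> k \<in> {1..n}) \<longrightarrow> A i j k = 0) \<and>
     (\<forall>j\<in>{1..n}. \<forall>k\<in>{1..n}. alt_sign_line n (\<lambda>i. A i j k)) \<and>
     (\<forall>i\<in>{1..n}. \<forall>k\<in>{1..n}. alt_sign_line n (\<lambda>j. A i j k)) \<and>
     (\<forall>i\<in>{1..n}. \<forall>j\<in>{1..n}. alt_sign_line n (\<lambda>k. A i j k))"

definition plane :: "hypermatrix \<Rightarrow> nat \<Rightarrow> nat \<Rightarrow> nat \<Rightarrow> int" where
  "plane A k = (\<lambda>i j. A i j k)"

definition Lmat :: "nat \<Rightarrow> hypermatrix \<Rightarrow> nat \<Rightarrow> nat \<Rightarrow> int" where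
  "Lmat n A = (\<lambda>i j. \<Sum>k = 1..n. int k * plane A k i j)"

end

theory Submission imports Defs begin

text \<open>A \<open>-1\<close> entry must lie strictly inside each of its three lines, so for \<open>n \<le> 2\<close> there are
  none and for \<open>n = 3\<close> only the centre \<open>a\<^sub>2\<^sub>2\<^sub>2\<close> can be \<open>-1\<close>. A line without \<open>-1\<close> is a unit
  vector \<open>e\<^sub>k\<close>, and its weight \<open>\<Sum> k f\<^sub>k\<close>, which is what \<open>L\<close> records, is \<open>k\<close>. So \<open>L\<close> determines
  every vertical line except that \<open>(1,-1,1)\<close> and \<open>e\<^sub>2\<close> both have weight 2. This ambiguity only
  arises at the centre, and it is resolved there: if \<open>a\<^sub>2\<^sub>2\<^sub>2 = -1\<close> then \<open>a\<^sub>1\<^sub>2\<^sub>2 = 1\<close>, so \<open>L\<^sub>1\<^sub>2 = L\<^sub>2\<^sub>2 = 2\<close>,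
  and a second hypermatrix with these values and no central \<open>-1\<close> would have two entries 1 in
  the line \<open>(b\<^sub>i\<^sub>2\<^sub>2)\<^sub>i\<close>.\<close>

definition line_weight :: "nat \<Rightarrow> (nat \<Rightarrow> int) \<Rightarrow> int" where
  "line_weight n f = (\<Sum>k = 1..n. int k * f k)"

lemma Lmat_eq_line_weight: "Lmat n A i j = line_weight n (\<lambda>k. A i j k)"
  unfolding Lmat_def plane_def line_weight_def ..

lemma line_weight_3: "line_weight 3 f = f 1 + 2 * f 2 + 3 * f 3"
  unfolding line_weight_def by (simp add: numeral_eq_Suc)

lemma line_weight_unit:
  assumes "k \<in> {1..n}" "\<forall>i\<in>{1..n}. f i = of_bool (i = k)"
  shows "line_weight n f = int k"
proof -
  have "line_weight n f = (\<Sum>i = 1..n. if i = k then int k else 0)"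
    unfolding line_weight_def using assms(2) by (intro sum.cong) auto
  also have "\<dots> = int k" using assms(1) by simp
  finally show ?thesis .
qed

lemma alt_sign_line_first_last:
  assumes "alt_sign_line n f" "n \<ge> 1"
  shows "f 1 \<noteq> -1" and "f n \<noteq> -1"
proof -
  have "[1..<n+1] = 1 # [Suc 1..<n+1]" using assms(2) by (intro upt_conv_Cons) simp
  then show "f 1 \<noteq> -1" using assms(1) unfolding alt_sign_line_def Let_def by auto
  have "[1..<n+1] = [1..<n] @ [n]" using assms(2) by simp
  then show "f n \<noteq> -1" using assms(1) unfolding alt_sign_line_def Let_def by auto
qed

lemma alt_sign_line_neg_interior:
  assumes "alt_sign_line n f" "i \<in> {1..n}" "f i = -1"
  shows "i \<in> {1<..<n}"
proof -
  have "i \<noteq> 1" "i \<noteq> n" using alt_sign_line_first_last[OF assms(1)] assms(2,3) by auto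
  then show ?thesis using assms(2) by auto
qed

lemma alt_sign_line_without_neg:
  assumes asl: "alt_sign_line n f" and nonneg: "\<forall>i\<in>{1..n}. f i \<noteq> -1"
  obtains k where "k \<in> {1..n}" "\<forall>i\<in>{1..n}. f i = of_bool (i = k)"
proof -
  define xs where "xs = filter (\<lambda>x. x \<noteq> 0) (map f [1..<n+1])"
  have ones: "x = 1" if "x \<in> set xs" for x
    using that asl nonneg unfolding xs_def alt_sign_line_def by auto
  have "xs \<noteq> []" and alt: "\<forall>i. Suc i < length xs \<longrightarrow> xs ! Suc i = - (xs ! i)"
    using asl unfolding alt_sign_line_def xs_def Let_def by auto
  have "length xs = 1"
  proof (rule ccontr)
    assume "length xs \<noteq> 1"
    with \<open>xs \<noteq> []\<close> have "1 < length xs" by (cases xs) auto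
    then have "xs ! 1 = - (xs ! 0)" "xs ! 0 = 1" "xs ! 1 = 1"
      using alt ones[OF nth_mem] by auto
    then show False by simp
  qed
  moreover have "{i. i < length (map f [1..<n+1]) \<and> map f [1..<n+1] ! i \<noteq> 0}
      = {i. i < n \<and> f (Suc i) \<noteq> 0}"
    by (auto simp del: upt_Suc)
  ultimately have "card {i. i < n \<and> f (Suc i) \<noteq> 0} = 1"
    unfolding xs_def length_filter_conv_card by simp
  then obtain k0 where "{i. i < n \<and> f (Suc i) \<noteq> 0} = {k0}" by (rule card_1_singletonE)
  then have k0: "i < n \<and> f (Suc i) \<noteq> 0 \<longleftrightarrow> i = k0" for i
    unfolding set_eq_iff mem_Collect_eq singleton_iff by blast
  show ?thesis
  proof (rule that)
    show "Suc k0 \<in> {1..n}" using k0[of k0] by simp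
    show "\<forall>i\<in>{1..n}. f i = of_bool (i = Suc k0)"
    proof
      fix i assume i: "i \<in> {1..n}"
      then have "f i \<in> {-1, 0, 1}" using asl unfolding alt_sign_line_def by auto
      moreover have "f i \<noteq> 0 \<longleftrightarrow> i = Suc k0"
        using k0[of "i - 1"] i by (cases i) auto
      ultimately show "f i = of_bool (i = Suc k0)" using nonneg i by auto
    qed
  qed
qed

lemma alt_sign_line_without_neg_weight_iff:
  assumes "alt_sign_line n f" "\<forall>i\<in>{1..n}. f i \<noteq> -1" "k \<in> {1..n}"
  shows "f k = 1 \<longleftrightarrow> line_weight n f = int k"
proof -
  obtain m where m: "m \<in> {1..n}" "\<forall>i\<in>{1..n}. f i = of_bool (i = m)"
    using alt_sign_line_without_neg assms(1,2) by blast
  then show ?thesis using line_weight_unit[OF m] assms(3) by auto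
qed

lemma alt_sign_line_without_neg_eq:
  assumes "alt_sign_line n f" "\<forall>i\<in>{1..n}. f i \<noteq> -1"
    and "alt_sign_line n g" "\<forall>i\<in>{1..n}. g i \<noteq> -1"
    and "line_weight n f = line_weight n g"
  shows "\<forall>i\<in>{1..n}. f i = g i"
proof -
  obtain k where k: "k \<in> {1..n}" "\<forall>i\<in>{1..n}. f i = of_bool (i = k)"
    using alt_sign_line_without_neg assms(1,2) by blast
  obtain m where m: "m \<in> {1..n}" "\<forall>i\<in>{1..n}. g i = of_bool (i = m)"
    using alt_sign_line_without_neg assms(3,4) by blast
  have "k = m" using line_weight_unit[OF k] line_weight_unit[OF m] assms(5) by simp
  then show ?thesis using k(2) m(2) by simp
qed

lemma alt_sign_line_3_centre_neg:
  assumes "alt_sign_line 3 f" "f 2 = -1"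
  shows "f 1 = 1" and "f 3 = 1"
proof -
  have "f 1 \<in> {0, 1}" "f 3 \<in> {0, 1}"
    using assms(1) alt_sign_line_first_last[OF assms(1)] unfolding alt_sign_line_def by auto
  then show "f 1 = 1" "f 3 = 1"
    using assms unfolding alt_sign_line_def by (auto simp: numeral_eq_Suc upt_rec)
qed

lemma ASHM_outside:
  "ASHM n A \<Longrightarrow> \<not> (i \<in> {1..n} \<and> j \<in> {1..n} \<and> k \<in> {1..n}) \<Longrightarrow> A i j k = 0"
  unfolding ASHM_def by blast

lemma ASHM_eqI:
  assumes "ASHM n A" "ASHM n B"
    and "\<forall>i\<in>{1..n}. \<forall>j\<in>{1..n}. \<forall>k\<in>{1..n}. A i j k = B i j k"
  shows "A = B"
proof (intro ext)
  fix i j k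
  show "A i j k = B i j k"
    using assms(3) ASHM_outside[OF assms(1), of i j k] ASHM_outside[OF assms(2), of i j k]
    by (cases "i \<in> {1..n} \<and> j \<in> {1..n} \<and> k \<in> {1..n}") auto
qed

lemma ASHM_row_line: "ASHM n A \<Longrightarrow> j \<in> {1..n} \<Longrightarrow> k \<in> {1..n} \<Longrightarrow> alt_sign_line n (\<lambda>i. A i j k)"
  and ASHM_column_line: "ASHM n A \<Longrightarrow> i \<in> {1..n} \<Longrightarrow> k \<in> {1..n} \<Longrightarrow> alt_sign_line n (\<lambda>j. A i j k)"
  and ASHM_vertical_line: "ASHM n A \<Longrightarrow> i \<in> {1..n} \<Longrightarrow> j \<in> {1..n} \<Longrightarrow> alt_sign_line n (\<lambda>k. A i j k)"
  by (simp_all add: ASHM_def)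

lemma ASHM_neg_interior:
  assumes A: "ASHM n A" and neg: "A i j k = -1"
  shows "i \<in> {1<..<n}" "j \<in> {1<..<n}" "k \<in> {1<..<n}"
proof -
  have "i \<in> {1..n} \<and> j \<in> {1..n} \<and> k \<in> {1..n}"
    using ASHM_outside[OF A, of i j k] neg by fastforce
  then have ijk: "i \<in> {1..n}" "j \<in> {1..n}" "k \<in> {1..n}" by auto
  show "i \<in> {1<..<n}"
    using alt_sign_line_neg_interior[OF ASHM_row_line[OF A ijk(2,3)] ijk(1)] neg by simp
  show "j \<in> {1<..<n}"
    using alt_sign_line_neg_interior[OF ASHM_column_line[OF A ijk(1,3)] ijk(2)] neg by simp
  show "k \<in> {1<..<n}"
    using alt_sign_line_neg_interior[OF ASHM_vertical_line[OF A ijk(1,2)] ijk(3)] neg by simp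
qed

lemma ASHM_neg_le_3:
  assumes "ASHM n A" "n \<le> 3" "A i j k = -1"
  shows "n = 3 \<and> i = 2 \<and> j = 2 \<and> k = 2"
  using ASHM_neg_interior[OF assms(1,3)] assms(2) unfolding greaterThanLessThan_iff by linarith

lemma ASHM_3_centre_neg_transfer:
  assumes A: "ASHM 3 A" and B: "ASHM 3 B"
    and L12: "Lmat 3 A 1 2 = Lmat 3 B 1 2" and L22: "Lmat 3 A 2 2 = Lmat 3 B 2 2"
    and centre: "A 2 2 2 = -1"
  shows "B 2 2 2 = -1"
proof (rule ccontr)
  assume B_centre: "B 2 2 2 \<noteq> -1"
  have A12_no_neg: "\<forall>k\<in>{1..3}. A 1 2 k \<noteq> -1"
    using ASHM_neg_le_3[OF A le_refl, of 1 2] by fastforce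
  have B12_no_neg: "\<forall>k\<in>{1..3}. B 1 2 k \<noteq> -1"
    using ASHM_neg_le_3[OF B le_refl, of 1 2] by fastforce
  have B22_no_neg: "\<forall>k\<in>{1..3}. B 2 2 k \<noteq> -1"
    using ASHM_neg_le_3[OF B le_refl, of 2 2] B_centre by fastforce
  have row_no_neg: "\<forall>i\<in>{1..3}. B i 2 2 \<noteq> -1"
    using ASHM_neg_le_3[OF B le_refl, of _ 2 2] B_centre by fastforce
  have "A 1 2 2 = 1"
    using alt_sign_line_3_centre_neg(1)[OF ASHM_row_line[OF A] centre] by simp
  then have "Lmat 3 A 1 2 = 2"
    using alt_sign_line_without_neg_weight_iff[OF ASHM_vertical_line[OF A, of 1 2] A12_no_neg, of 2]
    by (simp add: Lmat_eq_line_weight)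
  then have B12: "B 1 2 2 = 1"
    using alt_sign_line_without_neg_weight_iff[OF ASHM_vertical_line[OF B, of 1 2] B12_no_neg, of 2]
      L12 by (simp add: Lmat_eq_line_weight)
  have "Lmat 3 A 2 2 = 2"
    using alt_sign_line_3_centre_neg[OF ASHM_vertical_line[OF A, of 2 2] centre]
    by (simp add: Lmat_eq_line_weight line_weight_3 centre)
  then have B22: "B 2 2 2 = 1"
    using alt_sign_line_without_neg_weight_iff[OF ASHM_vertical_line[OF B, of 2 2] B22_no_neg, of 2]
      L22 by (simp add: Lmat_eq_line_weight)
  have row: "alt_sign_line 3 (\<lambda>i. B i 2 2)"
    using ASHM_row_line[OF B] by simp
  show False
    using alt_sign_line_without_neg_weight_iff[OF row row_no_neg, of 1]
      alt_sign_line_without_neg_weight_iff[OF row row_no_neg, of 2] B12 B22 by simp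
qed

lemma ASHM_Lmat_inj_le_3:
  assumes "n \<le> 3" and A: "ASHM n A" and B: "ASHM n B"
    and L: "\<forall>i\<in>{1..n}. \<forall>j\<in>{1..n}. Lmat n A i j = Lmat n B i j"
  shows "A = B"
proof (rule ASHM_eqI[OF A B], intro ballI)
  fix i j k assume i: "i \<in> {1..n}" and j: "j \<in> {1..n}" and k: "k \<in> {1..n}"
  show "A i j k = B i j k"
  proof (cases "\<forall>k\<in>{1..n}. A i j k \<noteq> -1 \<and> B i j k \<noteq> -1")
    case True
    then show ?thesis
      using alt_sign_line_without_neg_eq[OF ASHM_vertical_line[OF A i j] _ ASHM_vertical_line[OF B i j]]
        L i j k by (simp add: Lmat_eq_line_weight)
  next
    case False
    then obtain k' where "A i j k' = -1 \<or> B i j k' = -1" by blast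
    then have n: "n = 3" and ij: "i = 2" "j = 2"
      using ASHM_neg_le_3[OF A \<open>n \<le> 3\<close>, of i j k'] ASHM_neg_le_3[OF B \<open>n \<le> 3\<close>, of i j k']
      by blast+
    have A3: "ASHM 3 A" and B3: "ASHM 3 B" using A B n by simp_all
    have "A 2 2 2 = -1 \<longleftrightarrow> B 2 2 2 = -1"
      using ASHM_3_centre_neg_transfer[OF A3 B3] ASHM_3_centre_neg_transfer[OF B3 A3] L n by auto
    then have "A 2 2 2 = -1" "B 2 2 2 = -1"
      using False ASHM_neg_le_3[OF A \<open>n \<le> 3\<close>] ASHM_neg_le_3[OF B \<open>n \<le> 3\<close>] by blast+
    then have "A 2 2 k' = B 2 2 k'" if "k' \<in> {1..3}" for k'
      using alt_sign_line_3_centre_neg[OF ASHM_vertical_line[OF A3, of 2 2]]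
        alt_sign_line_3_centre_neg[OF ASHM_vertical_line[OF B3, of 2 2]] that
      by (auto simp: numeral_eq_Suc le_Suc_eq)
    then show ?thesis using k n ij by simp
  qed
qed

text \<open>\<open>P ! (k-1)\<close> is the plane \<open>P\<^sub>k\<close>, given as its list of rows.\<close>

definition hypermatrix_of_planes :: "nat \<Rightarrow> int list list list \<Rightarrow> hypermatrix" where
  "hypermatrix_of_planes n P =
     (\<lambda>i j k. if i \<in> {1..n} \<and> j \<in> {1..n} \<and> k \<in> {1..n} then P ! (k-1) ! (i-1) ! (j-1) else 0)"

definition ASHM_4_A :: hypermatrix where
  "ASHM_4_A = hypermatrix_of_planes 4
     [[[0, 0, 0, 1], [0, 0, 1, 0], [0, 1, 0, 0], [1, 0, 0, 0]],
      [[0, 0, 1, 0], [0, 1, -1, 1], [1, -1, 1, 0], [0, 1, 0, 0]],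
      [[0, 1, 0, 0], [1, 0, 0, 0], [0, 0, 0, 1], [0, 0, 1, 0]],
      [[1, 0, 0, 0], [0, 0, 1, 0], [0, 1, 0, 0], [0, 0, 0, 1]]]"

definition ASHM_4_B :: hypermatrix where
  "ASHM_4_B = hypermatrix_of_planes 4
     [[[0, 0, 0, 1], [0, 1, 0, 0], [0, 0, 1, 0], [1, 0, 0, 0]],
      [[0, 0, 1, 0], [0, 0, 0, 1], [1, 0, 0, 0], [0, 1, 0, 0]],
      [[0, 1, 0, 0], [1, -1, 1, 0], [0, 1, -1, 1], [0, 0, 1, 0]],
      [[1, 0, 0, 0], [0, 1, 0, 0], [0, 0, 1, 0], [0, 0, 0, 1]]]"

lemma index_range_4: "{1..4::nat} = {1, 2, 3, 4}" "[1..<4+1] = [1, 2, 3, 4::nat]"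
  by (auto simp: numeral_eq_Suc upt_rec)

lemma ASHM_4_A: "ASHM 4 ASHM_4_A"
  unfolding ASHM_def alt_sign_line_def ASHM_4_A_def hypermatrix_of_planes_def index_range_4
  by (simp add: less_Suc_eq nth_Cons split: nat.splits)

lemma ASHM_4_B: "ASHM 4 ASHM_4_B"
  unfolding ASHM_def alt_sign_line_def ASHM_4_B_def hypermatrix_of_planes_def index_range_4
  by (simp add: less_Suc_eq nth_Cons split: nat.splits)

lemma ASHM_4_A_neq_B: "ASHM_4_A \<noteq> ASHM_4_B"
proof
  assume "ASHM_4_A = ASHM_4_B"
  then have "ASHM_4_A 2 2 2 = ASHM_4_B 2 2 2" by simp
  then show False unfolding ASHM_4_A_def ASHM_4_B_def hypermatrix_of_planes_def by simp
qed

lemma Lmat_ASHM_4_A_B: "\<forall>i\<in>{1..4}. \<forall>j\<in>{1..4}. Lmat 4 ASHM_4_A i j = Lmat 4 ASHM_4_B i j"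
  unfolding Lmat_def plane_def ASHM_4_A_def ASHM_4_B_def hypermatrix_of_planes_def index_range_4
  by simp

theorem theorem2p9:
  shows "(\<forall>n \<le> 3. \<not> (\<exists>A B. ASHM n A \<and> ASHM n B \<and> A \<noteq> B \<and>
              (\<forall>i\<in>{1..n}. \<forall>j\<in>{1..n}. Lmat n A i j = Lmat n B i j)))
         \<and> (\<exists>A B. ASHM 4 A \<and> ASHM 4 B \<and> A \<noteq> B \<and>
              (\<forall>i\<in>{1..4}. \<forall>j\<in>{1..4}. Lmat 4 A i j = Lmat 4 B i j))"
  using ASHM_Lmat_inj_le_3 ASHM_4_A ASHM_4_B ASHM_4_A_neq_B Lmat_ASHM_4_A_B by blast

end
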